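(* Let $k\ge 2$ be an integer and $n=6k$. There is no balanced permutation sequence of length $n$.
   Context: Let $n$ be a positive integer, $N$ a set of $n$ players and $[n]=\{1,\ldots,n\}$ a set of $n$ items. A permutation sequence of length $n$ is an ordered tuple $(\pi_1,\ldots,\pi_n)$ of bijections $\pi_t : N\to[n]$; on day $t$ player $i$ receives item $\pi_t(i)$. For $t\in[n]$ and $i\in N$, $Z_i^t$ is the multiset $\{\pi_1(i),\ldots,\pi_t(i)\}$, and for $j\in[t]$, $Z_i^t[j]$ is the $j$-th smallest element of $Z_i^t$ (counted with multiplicity). The sequence is called balanced if for every $t\in[n]$, every $i\in N$ and every $j\in[t]$: $Z_i^t[j]\le \lceil jn/t\rceil$. *)

theory Defs
  imports Complex_Main "HOL-Library.Multiset"
begin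

text \<open>Players form a finite set N, items are {1..n}. A permutation sequence of
length n is a map pi from days t (only t in {1..n} matter) to bijections N -> {1..n}.\<close>

definition perm_seq :: "'a set \<Rightarrow> nat \<Rightarrow> (nat \<Rightarrow> 'a \<Rightarrow> nat) \<Rightarrow> bool" where
  "perm_seq N n \<pi> \<longleftrightarrow> (\<forall>t\<in>{1..n}. bij_betw (\<pi> t) N {1..n})"

definition Zset :: "(nat \<Rightarrow> 'a \<Rightarrow> nat) \<Rightarrow> 'a \<Rightarrow> nat \<Rightarrow> nat multiset" where
  "Zset \<pi> i t = mset (map (\<lambda>s. \<pi> s i) [1..<Suc t])"

definition kth_smallest :: "nat multiset \<Rightarrow> nat \<Rightarrow> nat" where
  "kth_smallest M j = sorted_list_of_multiset M ! (j - 1)"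

definition balanced :: "'a set \<Rightarrow> nat \<Rightarrow> (nat \<Rightarrow> 'a \<Rightarrow> nat) \<Rightarrow> bool" where
  "balanced N n \<pi> \<longleftrightarrow> perm_seq N n \<pi> \<and>
     (\<forall>t\<in>{1..n}. \<forall>i\<in>N. \<forall>j\<in>{1..t}.
        int (kth_smallest (Zset \<pi> i t) j) \<le> \<lceil>real (j * n) / real t\<rceil>)"

end

theory Submission
  imports Defs
begin

text \<open>Only 3k items lie in [1, 3k] each day, so the condition (t, j) = (2, 1), which
asks every player for such an item on day 1 or 2, is tight: every player gets one on exactly one of
the first two days; likewise (t, j) = (4, 2) puts exactly two of the first four days of every player
into [1, 3k]. The 2k players receiving an item of (2k, 3k] on day 1 or day 2 have no item \<le> 2k on
those days, so (t, j) = (3, 1) gives them one on day 3, their day-4 item then exceeds 3k, and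
(t, j) = (4, 1) forces their day-3 item into [1, \<lceil>3k/2\<rceil>]. Being distinct, these 2k items
need 2k \<le> \<lceil>3k/2\<rceil>, i.e. k \<le> 1.\<close>

lemma kth_smallest_le_imp_le_size_filter:
  assumes "kth_smallest M j \<le> c" "1 \<le> j" "j \<le> size M"
  shows "j \<le> size (filter_mset (\<lambda>v. v \<le> c) M)"
proof -
  define xs where "xs = sorted_list_of_multiset M"
  have sorted: "sorted xs" and len: "length xs = size M" and mset: "mset xs = M"
    by (simp_all add: xs_def flip: size_mset)
  have "{..<j} \<subseteq> {m. m < length xs \<and> xs ! m \<le> c}"
  proof
    fix m assume "m \<in> {..<j}"
    then have "m \<le> j - 1" "j - 1 < length xs" using assms(2,3) len by auto
    then have "xs ! m \<le> xs ! (j - 1)" using sorted by (simp add: sorted_nth_mono)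
    also have "\<dots> \<le> c" using assms(1) by (simp add: kth_smallest_def xs_def)
    finally show "m \<in> {m. m < length xs \<and> xs ! m \<le> c}"
      using \<open>j - 1 < length xs\<close> \<open>m \<le> j - 1\<close> by simp
  qed
  then have "j \<le> card {m. m < length xs \<and> xs ! m \<le> c}"
    by (metis card_lessThan card_mono finite_Collect_conjI finite_Collect_less_nat)
  also have "\<dots> = size (filter_mset (\<lambda>v. v \<le> c) M)"
    by (simp add: length_filter_conv_card flip: mset mset_filter)
  finally show ?thesis .
qed

lemma size_Zset: "size (Zset \<pi> i t) = t"
  by (simp add: Zset_def)

lemma size_filter_Zset: "size (filter_mset P (Zset \<pi> i t)) = card {s\<in>{1..t}. P (\<pi> s i)}"
proof -
  have "size (filter_mset P (Zset \<pi> i t)) = length (filter (\<lambda>s. P (\<pi> s i)) [1..<Suc t])"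
    by (simp only: Zset_def flip: mset_filter) (simp only: size_mset filter_map length_map comp_def)
  also have "\<dots> = card (set (filter (\<lambda>s. P (\<pi> s i)) [1..<Suc t]))"
    by (simp only: distinct_card distinct_filter distinct_upt)
  also have "set (filter (\<lambda>s. P (\<pi> s i)) [1..<Suc t]) = {s\<in>{1..t}. P (\<pi> s i)}"
    by auto
  finally show ?thesis .
qed

text \<open>Since \<open>\<lceil>jn/t\<rceil> \<le> c\<close> iff \<open>jn \<le> ct\<close>, the bound can be stated without ceilings.\<close>

lemma balanced_imp_le_card_days:
  assumes "balanced N n \<pi>" "t \<in> {1..n}" "i \<in> N" "j \<in> {1..t}" "j * n \<le> c * t"
  shows "j \<le> card {s\<in>{1..t}. \<pi> s i \<le> c}"
proof -
  have "int (kth_smallest (Zset \<pi> i t) j) \<le> \<lceil>real (j * n) / real t\<rceil>"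
    using assms(1-4) unfolding balanced_def by blast
  also have "\<dots> \<le> int c"
  proof (rule ceiling_le)
    have "real (j * n) \<le> real c * real t" using assms(5) by (simp flip: of_nat_mult)
    then show "real (j * n) / real t \<le> real_of_int (int c)"
      using assms(2) by (simp add: divide_le_eq)
  qed
  finally have "j \<le> size (filter_mset (\<lambda>v. v \<le> c) (Zset \<pi> i t))"
    by (intro kth_smallest_le_imp_le_size_filter) (use assms(4) in \<open>auto simp: size_Zset\<close>)
  then show ?thesis by (simp add: size_filter_Zset)
qed

lemma perm_seq_card_players_with_item_in:
  assumes "perm_seq N n \<pi>" "s \<in> {1..n}" "A \<subseteq> {1..n}"
  shows "card {i\<in>N. \<pi> s i \<in> A} = card A"
proof -
  have bij: "bij_betw (\<pi> s) N {1..n}" using assms(1,2) unfolding perm_seq_def by blast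
  then have "\<pi> s ` {i\<in>N. \<pi> s i \<in> A} = A" using assms(3) unfolding bij_betw_def by auto
  then have "bij_betw (\<pi> s) {i\<in>N. \<pi> s i \<in> A} A" by (intro bij_betw_subset[OF bij]) auto
  then show ?thesis by (rule bij_betw_same_card)
qed

lemma perm_seq_card_players_with_item_le:
  assumes "perm_seq N n \<pi>" "s \<in> {1..n}" "c \<le> n"
  shows "card {i\<in>N. \<pi> s i \<le> c} = c"
proof -
  have "\<pi> s ` N = {1..n}" using assms(1,2) unfolding perm_seq_def bij_betw_def by blast
  then have "{i\<in>N. \<pi> s i \<le> c} = {i\<in>N. \<pi> s i \<in> {1..c}}" by force
  then show ?thesis using perm_seq_card_players_with_item_in[OF assms(1,2), of "{1..c}"] assms(3)
    by simp
qed

lemma card_filter_eq_sum_of_bool: "finite A \<Longrightarrow> card {s\<in>A. P s} = (\<Sum>s\<in>A. of_bool (P s))"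
  by (simp add: sum.If_cases Int_def)

lemma perm_seq_sum_card_days_le:
  assumes "perm_seq N n \<pi>" "finite N" "S \<subseteq> {1..n}" "c \<le> n"
  shows "(\<Sum>i\<in>N. card {s\<in>S. \<pi> s i \<le> c}) = card S * c"
proof -
  have "finite S" using assms(3) finite_subset by blast
  then have "(\<Sum>i\<in>N. card {s\<in>S. \<pi> s i \<le> c}) = (\<Sum>i\<in>N. \<Sum>s\<in>S. of_bool (\<pi> s i \<le> c))"
    by (simp only: card_filter_eq_sum_of_bool)
  also have "\<dots> = (\<Sum>s\<in>S. \<Sum>i\<in>N. of_bool (\<pi> s i \<le> c))"
    by (rule sum.swap)
  also have "\<dots> = (\<Sum>s\<in>S. card {i\<in>N. \<pi> s i \<le> c})"
    using assms(2) by (simp only: card_filter_eq_sum_of_bool)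
  also have "\<dots> = (\<Sum>s\<in>S. c)"
    using assms(3) by (intro sum.cong refl perm_seq_card_players_with_item_le[OF assms(1) _ assms(4)]) auto
  finally show ?thesis by simp
qed

text \<open>If the lower bound \<open>j\<close> is attained on average over the players, it is attained by each.\<close>

lemma perm_seq_card_days_le_eq:
  assumes "perm_seq N n \<pi>" "finite N" "card N = n" "t \<le> n" "c \<le> n" "t * c = j * n"
    and lower: "\<And>i. i \<in> N \<Longrightarrow> j \<le> card {s\<in>{1..t}. \<pi> s i \<le> c}" and "i \<in> N"
  shows "card {s\<in>{1..t}. \<pi> s i \<le> c} = j"
proof -
  have "(\<Sum>i\<in>N. j) = (\<Sum>i\<in>N. card {s\<in>{1..t}. \<pi> s i \<le> c})"
    using perm_seq_sum_card_days_le[OF assms(1,2), of "{1..t}" c] assms(3-6) by simp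
  from sum_mono_inv[OF this lower \<open>i \<in> N\<close> \<open>finite N\<close>] show ?thesis by simp
qed

lemma card_filter_first_days:
  "card {s\<in>{1..2::nat}. P s} = of_bool (P 1) + of_bool (P 2)"
  "card {s\<in>{1..3::nat}. P s} = of_bool (P 1) + of_bool (P 2) + of_bool (P 3)"
  "card {s\<in>{1..4::nat}. P s} = of_bool (P 1) + of_bool (P 2) + of_bool (P 3) + of_bool (P 4)"
  by (simp_all only: card_filter_eq_sum_of_bool[OF finite_atLeastAtMost])
    (simp_all add: numeral_eq_Suc)

locale balanced_6k =
  fixes N :: "'a set" and \<pi> :: "nat \<Rightarrow> 'a \<Rightarrow> nat" and k :: nat
  assumes balanced: "balanced N (6 * k) \<pi>"
    and finite: "finite N" and card: "card N = 6 * k" and pos: "1 \<le> k"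
begin

lemma perm_seq: "perm_seq N (6 * k) \<pi>"
  using balanced unfolding balanced_def by blast

lemma bij_day: "s \<in> {1..6 * k} \<Longrightarrow> bij_betw (\<pi> s) N {1..6 * k}"
  using perm_seq unfolding perm_seq_def by blast

lemma once_in_first_two_days:
  assumes "i \<in> N" shows "card {s\<in>{1..2}. \<pi> s i \<le> 3 * k} = 1"
proof (rule perm_seq_card_days_le_eq[OF perm_seq finite card _ _ _ _ assms])
  show "1 \<le> card {s\<in>{1..2}. \<pi> s i' \<le> 3 * k}" if "i' \<in> N" for i'
    by (rule balanced_imp_le_card_days[OF balanced]) (use that pos in auto)
qed (use pos in auto)

lemma twice_in_first_four_days:
  assumes "i \<in> N" shows "card {s\<in>{1..4}. \<pi> s i \<le> 3 * k} = 2"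
proof (rule perm_seq_card_days_le_eq[OF perm_seq finite card _ _ _ _ assms])
  show "2 \<le> card {s\<in>{1..4}. \<pi> s i' \<le> 3 * k}" if "i' \<in> N" for i'
    by (rule balanced_imp_le_card_days[OF balanced]) (use that pos in auto)
qed (use pos in auto)

lemma third_day_small:
  assumes "i \<in> N" "2 * k < \<pi> 1 i" "2 * k < \<pi> 2 i"
  shows "\<pi> 3 i \<le> (3 * k + 1) div 2"
proof -
  have "1 \<le> card {s\<in>{1..3}. \<pi> s i \<le> 2 * k}"
    by (rule balanced_imp_le_card_days[OF balanced]) (use assms(1) pos in auto)
  then have "\<pi> 3 i \<le> 2 * k"
    using assms(2,3) unfolding card_filter_first_days by (simp add: of_bool_def split: if_splits)
  then have "3 * k < \<pi> 4 i"
    using once_in_first_two_days[OF assms(1)] twice_in_first_four_days[OF assms(1)]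
    unfolding card_filter_first_days by auto
  moreover have "1 \<le> card {s\<in>{1..4}. \<pi> s i \<le> (3 * k + 1) div 2}"
    by (rule balanced_imp_le_card_days[OF balanced]) (use assms(1) pos in auto)
  moreover have "(3 * k + 1) div 2 \<le> 2 * k" by linarith
  ultimately show ?thesis
    using assms(2,3) unfolding card_filter_first_days by (auto simp: of_bool_def split: if_splits)
qed

lemma le_one: "k \<le> 1"
proof -
  define late where "late s = {i\<in>N. \<pi> s i \<in> {2 * k<..3 * k}}" for s
  have card_late: "card (late s) = k" if "s \<in> {1..2}" for s
    unfolding late_def using that pos by (subst perm_seq_card_players_with_item_in[OF perm_seq]) auto
  have "late 1 \<inter> late 2 = {}"
    using once_in_first_two_days unfolding late_def card_filter_first_days by fastforce
  then have "card (late 1 \<union> late 2) = 2 * k"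
    using card_late finite by (simp add: card_Un_disjoint late_def)
  moreover have "inj_on (\<pi> 3) (late 1 \<union> late 2)"
    using bij_day[of 3] pos unfolding late_def bij_betw_def by (auto intro: inj_on_subset)
  moreover have "\<pi> 3 ` (late 1 \<union> late 2) \<subseteq> {1..(3 * k + 1) div 2}"
  proof (intro image_subsetI)
    fix i assume i: "i \<in> late 1 \<union> late 2"
    then have "i \<in> N" by (auto simp: late_def)
    then have "1 \<le> \<pi> 3 i" using bij_day[of 3] pos unfolding bij_betw_def by auto
    moreover have "2 * k < \<pi> 1 i" "2 * k < \<pi> 2 i"
      using i once_in_first_two_days[OF \<open>i \<in> N\<close>] unfolding late_def card_filter_first_days
      by (auto simp: of_bool_def split: if_splits)
    ultimately show "\<pi> 3 i \<in> {1..(3 * k + 1) div 2}" using third_day_small \<open>i \<in> N\<close> by auto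
  qed
  ultimately have "2 * k \<le> (3 * k + 1) div 2"
    by (metis card_inj_on_le card_atLeastAtMost diff_Suc_1 finite_atLeastAtMost)
  then show ?thesis by linarith
qed

end

theorem mainTheorem2:
  fixes N :: "'a set" and k :: nat
  assumes "k \<ge> 2" and "finite N" and "card N = 6 * k"
  shows "\<not> (\<exists>\<pi>. balanced N (6 * k) \<pi>)"
proof
  assume "\<exists>\<pi>. balanced N (6 * k) \<pi>"
  then obtain \<pi> where "balanced N (6 * k) \<pi>" ..
  then interpret balanced_6k N \<pi> k
    using assms by unfold_locales simp_all
  show False using le_one \<open>k \<ge> 2\<close> by simp
qed

end
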